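(* Let $\alpha\in\mathbb{R}$, let $p$ be a positive integer, $b\in\mathbb{R}$, and let $f$ be a real function defined on ${}_{b+p-1}\mathbb{N}=\{b+p-1,b+p-2,\dots\}$. Then for all $t\in{}_{b-p}\mathbb{N}$, $${}_{b}\nabla^{-\alpha}\,{}_{\ominus}\Delta^p f(t)={}_{\ominus}\Delta^p\,{}_{b}\nabla^{-\alpha}f(t)-\sum_{k=0}^{p-1}\frac{(b-t)^{\overline{\alpha-p+k}}}{\Gamma(\alpha+k-p+1)}\,{}_{\ominus}\Delta^k f(b).$$
   Context: Notation: ${}_{c}\mathbb{N}=\{c,c-1,\dots\}$, $\rho(t)=t-1$, $\Delta g(t)=g(t+1)-g(t)$, $\Delta^m=\Delta(\Delta^{m-1})$, ${}_{\ominus}\Delta^m g=(-1)^m\Delta^m g$. Rising factorial: $t^{\overline{\beta}}=\Gamma(t+\beta)/\Gamma(t)$ with $0^{\overline{\beta}}=0$; the reciprocal of $\Gamma$ at a pole is $0$. For $\gamma>0$ the nabla right fractional sum is ${}_{b}\nabla^{-\gamma}g(t)=\frac{1}{\Gamma(\gamma)}\sum_{s=t}^{b-1}(s-\rho(t))^{\overline{\gamma-1}}g(s)$, where a sum with upper limit smaller than lower limit is $0$ (so these sums vanish for $t\ge b$). For $\beta>0$ let $n=[\beta]+1$ with $[\beta]$ the greatest integer strictly less than $\beta$; the nabla right fractional difference is ${}_{b}\nabla^{\beta}g(t)={}_{\ominus}\Delta^n\,{}_{b}\nabla^{-(n-\beta)}g(t)=(-1)^n\Delta^n\,{}_{b}\nabla^{-(n-\beta)}g(t)$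 (order-$0$ operator = identity). In the claim, for $\alpha<0$ the symbol ${}_{b}\nabla^{-\alpha}$ means the nabla right fractional difference of order $-\alpha$, and for $\alpha=0$ it is the identity. *)

theory Defs
  imports "HOL-Analysis.Analysis"
begin

fun delta_pow :: "nat \<Rightarrow> (real \<Rightarrow> real) \<Rightarrow> real \<Rightarrow> real" where
  "delta_pow 0 g = g"
| "delta_pow (Suc m) g = (\<lambda>t. delta_pow m g (t + 1) - delta_pow m g t)"

definition ominus_delta_pow :: "nat \<Rightarrow> (real \<Rightarrow> real) \<Rightarrow> real \<Rightarrow> real" where
  "ominus_delta_pow m g = (\<lambda>t. (-1) ^ m * delta_pow m g t)"

text \<open>Rising factorial t^(beta bar) = Gamma(t+beta)/Gamma(t), with 0^(beta bar) = 0.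
  Division by Gamma at a pole (Gamma = 0 in Isabelle) yields 0, i.e. reciprocal of Gamma at a pole is 0.\<close>
definition rising :: "real \<Rightarrow> real \<Rightarrow> real" where
  "rising t \<beta> = (if t = 0 then 0 else Gamma (t + \<beta>) / Gamma t)"

text \<open>Nabla right fractional sum of order gamma > 0:
  (1/Gamma gamma) * sum_{s=t}^{b-1} (s - (t-1))^(gamma-1 bar) g(s), with s ranging over t, t+1, ...\<close>
definition nabla_sum :: "real \<Rightarrow> real \<Rightarrow> (real \<Rightarrow> real) \<Rightarrow> real \<Rightarrow> real" where
  "nabla_sum b \<gamma> g t =
     (1 / Gamma \<gamma>) * (\<Sum>j\<in>{j::nat. t + real j \<le> b - 1}.
        rising (t + real j - (t - 1)) (\<gamma> - 1) * g (t + real j))"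

text \<open>Nabla right fractional difference of order beta > 0, n = [beta] + 1 = ceiling beta;
  order-0 sum is the identity.\<close>
definition nabla_diff :: "real \<Rightarrow> real \<Rightarrow> (real \<Rightarrow> real) \<Rightarrow> real \<Rightarrow> real" where
  "nabla_diff b \<beta> g =
     (let n = nat \<lceil>\<beta>\<rceil> in
      ominus_delta_pow n (if real n - \<beta> = 0 then g else nabla_sum b (real n - \<beta>) g))"

definition nabla_op :: "real \<Rightarrow> real \<Rightarrow> (real \<Rightarrow> real) \<Rightarrow> real \<Rightarrow> real" where
  "nabla_op b \<alpha> g =
     (if \<alpha> > 0 then nabla_sum b \<alpha> g else if \<alpha> = 0 then g else nabla_diff b (- \<alpha>) g)"

end

theory Submission
  imports Defs
begin

(* Write D g t = g t - g (t + 1) for one step of the signed difference, so that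
   ominus_delta_pow m = D^m.  For any real order gamma consider the truncated discrete
   convolution
       S b gamma g t = sum_{i < floor (b - t)} c gamma i * g (t + i),
       c gamma i = pochhammer gamma i / i!,
   i.e. a sum with the generalised binomial weights. *)

definition neg_diff :: "(real \<Rightarrow> real) \<Rightarrow> real \<Rightarrow> real" where
  "neg_diff g = (\<lambda>t. g t - g (t + 1))"

definition binom_weight :: "real \<Rightarrow> nat \<Rightarrow> real" where
  "binom_weight \<gamma> i = pochhammer \<gamma> i / fact i"

definition weighted_sum :: "real \<Rightarrow> real \<Rightarrow> (real \<Rightarrow> real) \<Rightarrow> real \<Rightarrow> real" where
  "weighted_sum b \<gamma> g t = (\<Sum>i<nat \<lfloor>b - t\<rfloor>. binom_weight \<gamma> i * g (t + real i))"

text \<open>The signed difference powers are the iterates of \<open>neg_diff\<close>; as iterates they commute.\<close>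
lemma ominus_delta_pow_eq_funpow: "ominus_delta_pow m g = (neg_diff ^^ m) g"
proof (induction m)
  case 0
  then show ?case by (simp add: ominus_delta_pow_def)
next
  case (Suc m)
  have "ominus_delta_pow (Suc m) g = neg_diff (ominus_delta_pow m g)"
    by (rule ext) (simp add: ominus_delta_pow_def neg_diff_def algebra_simps)
  with Suc show ?case by simp
qed

lemma binom_weight_0 [simp]: "binom_weight \<gamma> 0 = 1"
  by (simp add: binom_weight_def)

lemma binom_weight_pascal:
  "binom_weight (\<gamma> - 1) (Suc i) = binom_weight \<gamma> (Suc i) - binom_weight \<gamma> i"
proof -
  have lower: "pochhammer (\<gamma> - 1) (Suc i) = (\<gamma> - 1) * pochhammer \<gamma> i"
    by (simp add: pochhammer_rec)
  have upper: "pochhammer \<gamma> (Suc i) = (\<gamma> + real i) * pochhammer \<gamma> i"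
    by (simp add: pochhammer_rec')
  have fact_step: "fact (Suc i) = (real i + 1) * (fact i :: real)" by simp
  have "fact i > (0::real)" by simp
  then have "(\<gamma> + real i) * pochhammer \<gamma> i / ((real i + 1) * fact i) - pochhammer \<gamma> i / fact i
             = ((\<gamma> + real i) * pochhammer \<gamma> i - (real i + 1) * pochhammer \<gamma> i)
               / ((real i + 1) * fact i)"
    by (simp add: diff_divide_distrib)
  also have "\<dots> = (\<gamma> - 1) * pochhammer \<gamma> i / ((real i + 1) * fact i)"
    by (simp add: algebra_simps)
  finally show ?thesis unfolding binom_weight_def lower upper fact_step by simp
qed

text \<open>The kernel of the nabla fractional sum at distance \<open>i + 1\<close> is the weight \<open>c \<gamma> i\<close>,
  both when \<open>\<Gamma>\<close> is finite at \<open>\<gamma>\<close> and when both sides vanish.\<close>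
lemma rising_div_Gamma_eq_binom_weight:
  assumes "\<gamma> \<notin> \<int>\<^sub>\<le>\<^sub>0 \<or> pochhammer \<gamma> i = 0"
  shows "rising (real (Suc i)) (\<gamma> - 1) / Gamma \<gamma> = binom_weight \<gamma> i"
  using assms
proof
  assume "\<gamma> \<notin> \<int>\<^sub>\<le>\<^sub>0"
  then have poch: "pochhammer \<gamma> i = Gamma (\<gamma> + real i) / Gamma \<gamma>"
    by (rule pochhammer_Gamma)
  have "rising (real (Suc i)) (\<gamma> - 1) = Gamma (\<gamma> + real i) / fact i"
    unfolding rising_def using Gamma_fact[of i, where 'a=real]
    by (simp add: add.commute add.left_commute)
  then show ?thesis unfolding binom_weight_def poch by simp
next
  assume "pochhammer \<gamma> i = 0"
  moreover from this obtain k where "\<gamma> = - real k" by (auto simp: pochhammer_eq_0_iff)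
  ultimately show ?thesis by (simp add: binom_weight_def)
qed

section \<open>The nabla fractional sum as a weighted sum\<close>

lemma index_set_eq: "{j::nat. t + real j \<le> b - 1} = {..<nat \<lfloor>b - t\<rfloor>}"
proof -
  have "t + real j \<le> b - 1 \<longleftrightarrow> j < nat \<lfloor>b - t\<rfloor>" for j
  proof -
    have "t + real j \<le> b - 1 \<longleftrightarrow> of_int (int j + 1) \<le> b - t" by auto
    also have "\<dots> \<longleftrightarrow> int j + 1 \<le> \<lfloor>b - t\<rfloor>" by (rule le_floor_iff[symmetric])
    also have "\<dots> \<longleftrightarrow> j < nat \<lfloor>b - t\<rfloor>" by auto
    finally show ?thesis .
  qed
  then show ?thesis by auto
qed

lemma nabla_sum_eq_weighted_sum:
  assumes "\<gamma> > 0"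
  shows "nabla_sum b \<gamma> g = weighted_sum b \<gamma> g"
proof (rule ext)
  fix t
  have "\<gamma> \<notin> \<int>\<^sub>\<le>\<^sub>0" using assms by auto
  then have "1 / Gamma \<gamma> * rising (t + real j - (t - 1)) (\<gamma> - 1) = binom_weight \<gamma> j" for j
    using rising_div_Gamma_eq_binom_weight[of \<gamma> j] by (simp add: add.commute)
  then show "nabla_sum b \<gamma> g t = weighted_sum b \<gamma> g t"
    unfolding nabla_sum_def weighted_sum_def index_set_eq sum_distrib_left
    by (intro sum.cong refl) (metis mult.assoc)
qed

section \<open>Differencing lowers the order\<close>

lemma nat_floor_shift: "nat \<lfloor>b - (t + 1)\<rfloor> = nat \<lfloor>b - t\<rfloor> - 1"
proof -
  have "\<lfloor>b - (t + 1)\<rfloor> = \<lfloor>b - t\<rfloor> - 1" by (metis diff_diff_eq floor_diff_one)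
  then show ?thesis by simp
qed

text \<open>Applying \<open>D\<close> to the weighted sum of order \<open>\<gamma>\<close> gives the one of order \<open>\<gamma> - 1\<close>
  (a telescoping consequence of Pascal's rule).\<close>
lemma neg_diff_weighted_sum: "neg_diff (weighted_sum b \<gamma> g) = weighted_sum b (\<gamma> - 1) g"
proof (rule ext)
  fix t
  show "neg_diff (weighted_sum b \<gamma> g) t = weighted_sum b (\<gamma> - 1) g t"
  proof (cases "nat \<lfloor>b - t\<rfloor>")
    case 0
    then show ?thesis unfolding neg_diff_def weighted_sum_def nat_floor_shift by simp
  next
    case (Suc M)
    let ?c = "binom_weight \<gamma>"
    have "neg_diff (weighted_sum b \<gamma> g) t
          = (\<Sum>i<Suc M. ?c i * g (t + real i)) - (\<Sum>i<M. ?c i * g (t + 1 + real i))"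
      unfolding neg_diff_def weighted_sum_def nat_floor_shift Suc by simp
    also have "\<dots> = g t + (\<Sum>i<M. (?c (Suc i) - ?c i) * g (t + 1 + real i))"
      by (subst sum.lessThan_Suc_shift) (simp add: algebra_simps sum_subtractf)
    also have "\<dots> = (\<Sum>i<Suc M. binom_weight (\<gamma> - 1) i * g (t + real i))"
      by (subst sum.lessThan_Suc_shift) (simp add: binom_weight_pascal algebra_simps)
    finally show ?thesis unfolding weighted_sum_def Suc .
  qed
qed

lemma funpow_neg_diff_weighted_sum:
  "(neg_diff ^^ n) (weighted_sum b \<gamma> g) = weighted_sum b (\<gamma> - real n) g"
  by (induction n) (simp_all add: neg_diff_weighted_sum algebra_simps)

lemma nabla_op_neg_nat: "nabla_op b (- real n) g = (neg_diff ^^ n) g"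
  by (cases "n = 0")
     (simp_all add: nabla_op_def nabla_diff_def Let_def ominus_delta_pow_eq_funpow)

text \<open>At every other order it is the weighted sum: for \<open>\<alpha> < 0\<close> the \<open>n = \<lceil>-\<alpha>\<rceil>\<close> differences
  lower the order of the sum \<open>n + \<alpha> > 0\<close> down to \<open>\<alpha>\<close>.\<close>
lemma nabla_op_eq_weighted_sum:
  assumes not_neg_nat: "\<not> (\<exists>n::nat. \<alpha> = - real n)"
  shows "nabla_op b \<alpha> g = weighted_sum b \<alpha> g"
proof (cases "\<alpha> > 0")
  case True
  then show ?thesis by (simp add: nabla_op_def nabla_sum_eq_weighted_sum)
next
  case False
  have "\<alpha> \<noteq> 0" using not_neg_nat by (metis of_nat_0 neg_0_equal_iff_equal)
  with False have neg: "\<alpha> < 0" by simp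
  define n where "n = nat \<lceil>- \<alpha>\<rceil>"
  have "real n \<ge> - \<alpha>" unfolding n_def using neg by simp
  moreover have "real n - (- \<alpha>) \<noteq> 0"
  proof
    assume "real n - (- \<alpha>) = 0"
    then have "\<alpha> = - real n" by simp
    with not_neg_nat show False by blast
  qed
  ultimately have pos: "real n + \<alpha> > 0" by simp
  have "nabla_op b \<alpha> g = (neg_diff ^^ n) (nabla_sum b (real n + \<alpha>) g)"
    using neg \<open>real n - (- \<alpha>) \<noteq> 0\<close>
    unfolding nabla_op_def nabla_diff_def Let_def n_def[symmetric]
    by (simp add: ominus_delta_pow_eq_funpow)
  also have "\<dots> = weighted_sum b \<alpha> g"
    unfolding nabla_sum_eq_weighted_sum[OF pos] funpow_neg_diff_weighted_sum by simp
  finally show ?thesis .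
qed

section \<open>Summation by parts\<close>

lemma weighted_sum_neg_diff:
  assumes "b - t = real (Suc M)"
  shows "weighted_sum b \<gamma> (neg_diff g) t
         = weighted_sum b (\<gamma> - 1) g t - binom_weight \<gamma> M * g b"
proof -
  let ?c = "binom_weight \<gamma>"
  have N: "nat \<lfloor>b - t\<rfloor> = Suc M" using assms by simp
  have endpoint: "t + real (Suc M) = b" using assms by simp
  have "weighted_sum b \<gamma> (neg_diff g) t
        = (\<Sum>i<Suc M. ?c i * g (t + real i)) - (\<Sum>i<Suc M. ?c i * g (t + real (Suc i)))"
    unfolding weighted_sum_def N neg_diff_def by (simp add: sum_subtractf algebra_simps)
  also have "(\<Sum>i<Suc M. ?c i * g (t + real (Suc i)))
             = (\<Sum>i<M. ?c i * g (t + real (Suc i))) + ?c M * g b"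
    using endpoint by simp
  also have "(\<Sum>i<Suc M. ?c i * g (t + real i))
             = g t + (\<Sum>i<M. ?c (Suc i) * g (t + real (Suc i)))"
    by (subst sum.lessThan_Suc_shift) simp
  also have "(\<Sum>i<Suc M. binom_weight (\<gamma> - 1) i * g (t + real i))
             = g t + (\<Sum>i<M. (?c (Suc i) - ?c i) * g (t + real (Suc i)))"
    by (subst sum.lessThan_Suc_shift) (simp add: binom_weight_pascal)
  ultimately show ?thesis
    unfolding weighted_sum_def N by (simp add: algebra_simps sum_subtractf)
qed

lemma weighted_sum_funpow_neg_diff:
  assumes lattice: "b - t = real (Suc M)"
  shows "weighted_sum b \<gamma> ((neg_diff ^^ p) g) t
         = weighted_sum b (\<gamma> - real p) g t
           - (\<Sum>k<p. binom_weight (\<gamma> - real p + real k + 1) M * (neg_diff ^^ k) g b)"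
proof (induction p arbitrary: \<gamma> g)
  case 0
  then show ?case by simp
next
  case (Suc p)
  have shift: "(neg_diff ^^ Suc k) g = (neg_diff ^^ k) (neg_diff g)" for k
    by (simp add: funpow_Suc_right del: funpow.simps)
  have "weighted_sum b \<gamma> ((neg_diff ^^ Suc p) g) t
        = weighted_sum b (\<gamma> - real p) (neg_diff g) t
          - (\<Sum>k<p. binom_weight (\<gamma> - real p + real k + 1) M * (neg_diff ^^ Suc k) g b)"
    unfolding shift by (rule Suc.IH)
  also have "weighted_sum b (\<gamma> - real p) (neg_diff g) t
             = weighted_sum b (\<gamma> - real p - 1) g t - binom_weight (\<gamma> - real p) M * g b"
    by (rule weighted_sum_neg_diff[OF lattice])
  finally show ?case
    by (subst sum.lessThan_Suc_shift) (simp add: algebra_simps)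
qed

section \<open>The boundary coefficients\<close>

lemma boundary_Gamma_pole:
  assumes "\<alpha> = - real n" and "k < p"
  shows "Gamma (\<alpha> + real k - real p + 1) = 0"
proof -
  obtain d where "p = Suc (k + d)" using less_imp_Suc_add[OF assms(2)] by blast
  with assms(1) have "\<alpha> + real k - real p + 1 = - real (n + d)" by simp
  then show ?thesis by (simp only: Gamma_neg_of_nat)
qed

text \<open>At any other order, for \<open>t = b - (M + 1)\<close> with \<open>p \<le> M + 1\<close>, the boundary coefficient
  is a generalised binomial weight; if its order is a nonpositive integer it is one that
  the Pochhammer symbol of length \<open>M\<close> already annihilates.\<close>
lemma boundary_coefficient:
  assumes not_neg_nat: "\<not> (\<exists>n::nat. \<alpha> = - real n)" and "k < p" and "p \<le> Suc M"
  shows "rising (real (Suc M)) (\<alpha> - real p + real k) / Gamma (\<alpha> + real k - real p + 1)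
         = binom_weight (\<alpha> - real p + real k + 1) M"
proof -
  let ?g = "\<alpha> - real p + real k + 1"
  have "?g \<notin> \<int>\<^sub>\<le>\<^sub>0 \<or> pochhammer ?g M = 0"
  proof (cases "?g \<in> \<int>\<^sub>\<le>\<^sub>0")
    case False
    then show ?thesis by blast
  next
    case True
    then obtain m where m: "?g = - real m" by (auto elim!: nonpos_Ints_cases')
    have "m + k + 1 < p"
    proof (rule ccontr)
      assume "\<not> m + k + 1 < p"
      then have "\<alpha> = - real (m + k + 1 - p)" using m by (simp add: of_nat_diff)
      with not_neg_nat show False by blast
    qed
    with \<open>p \<le> Suc M\<close> m have "pochhammer ?g M = 0"
      by (auto simp: pochhammer_eq_0_iff)
    then show ?thesis by blast
  qed
  from rising_div_Gamma_eq_binom_weight[OF this] show ?thesis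
    by (simp add: algebra_simps)
qed

theorem theorem2p10:
  fixes \<alpha> b :: real and p :: nat and f :: "real \<Rightarrow> real" and j :: nat
  assumes "p > 0"
  defines "t \<equiv> b - real p - real j"
  shows "nabla_op b \<alpha> (ominus_delta_pow p f) t =
           ominus_delta_pow p (nabla_op b \<alpha> f) t
           - (\<Sum>k<p. rising (b - t) (\<alpha> - real p + real k) / Gamma (\<alpha> + real k - real p + 1)
                       * ominus_delta_pow k f b)"
proof (cases "\<exists>n::nat. \<alpha> = - real n")
  case True
  then obtain n where n: "\<alpha> = - real n" by blast
  have commute: "(neg_diff ^^ n) ((neg_diff ^^ p) f) = (neg_diff ^^ p) ((neg_diff ^^ n) f)"
    by (metis add.commute comp_apply funpow_add)
  have "(\<Sum>k<p. rising (b - t) (\<alpha> - real p + real k) / Gamma (\<alpha> + real k - real p + 1)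
                * ominus_delta_pow k f b) = 0"
    by (intro sum.neutral) (simp add: boundary_Gamma_pole[OF n])
  then show ?thesis
    unfolding n nabla_op_neg_nat ominus_delta_pow_eq_funpow commute by simp
next
  case False
  obtain M where M: "p + j = Suc M" using assms by (cases "p + j") auto
  then have lattice: "b - t = real (Suc M)" unfolding t_def by (simp flip: of_nat_add)
  have "p \<le> Suc M" using M by simp
  then have boundary:
    "rising (b - t) (\<alpha> - real p + real k) / Gamma (\<alpha> + real k - real p + 1)
     = binom_weight (\<alpha> - real p + real k + 1) M" if "k < p" for k
    using boundary_coefficient[OF False that] lattice by simp
  show ?thesis
    unfolding nabla_op_eq_weighted_sum[OF False] ominus_delta_pow_eq_funpow
      funpow_neg_diff_weighted_sum weighted_sum_funpow_neg_diff[OF lattice]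
    using boundary by simp
qed

end
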